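(* Let $\Delta x>0$, $v>0$, $w>0$, $q_{max}>0$, $0\le n\le n_{max}$, and put $\bar n=n_{max}-n$. Let $U_{fw},U_{bw},Q,Y_{fw},Y_{bw}\in F$ with $U_{fw}(0)=U_{bw}(0)=Y_{fw}(0)=Y_{bw}(0)=0$ satisfy the road-section dynamics $$Q=A*Q\oplus B*U,\qquad Y=C*Q\oplus e,$$ where $U=(U_{fw},U_{bw})^T$, $Y=(Y_{fw},Y_{bw})^T$, $A=\gamma^{q_{max}\Delta x/v}\delta^{\Delta x/v}$ (a scalar), $B=(\gamma^{n}\delta^{\Delta x/v}\ \ e)$ (a $1\times 2$ row), $C=(e\ \ \gamma^{\bar n}\delta^{\Delta x/w})^T$ (a $2\times 1$ column), and $e$ in the second equation denotes the vector $(e,e)^T$. Explicitly, $Q(t)=\min\{Q(t-\Delta x/v)+q_{max}\Delta x/v,\ U_{fw}(t-\Delta x/v)+n,\ U_{bw}(t)\}$, $Y_{fw}=Q$, $Y_{bw}(t)=Q(t-\Delta x/w)+\bar n$ for $t>0$. Define $Z_{fw}(t)=\max(Y_{fw}(t)-n,0)$, $Z_{bw}(t)=\max(Y_{bw}(t)-\bar n,0)$ and $Z=(Z_{fw},Z_{bw})^T$. Then the matrix $H*(e\oplus C*A^{*}*B)$ is a service matrix for the road section seen as a server with input $U$ and output $Z$, i.e. $$Z\ge H*(e\oplus C*A^{*}*B)*U,\qquad H=\begin{pmatrix}\gamma^{-n}& e\\ e&\gamma^{-\bar n}\end{pmatrix},$$ where the $e$ added to $C*A^**B$ is the $2\times 2$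 identity matrix.
   Context: $F$ denotes the set of non-decreasing, non-negative functions of time $t\ge 0$. Min-plus operations: $(f\oplus g)(t)=\min(f(t),g(t))$, $(f*g)(t)=\min_{0\le s\le t}(f(s)+g(t-s))$; juxtaposition $fg$ means $f*g$. Special signals: $\varepsilon(t)=+\infty$ for all $t$; $e(0)=0$, $e(t)=+\infty$ for $t>0$; the gain $\gamma^p(0)=p$, $\gamma^p(t)=+\infty$ for $t>0$ (so $\gamma^p*f=f+p$; $p$ may be negative); the shift $\delta^T(t)=0$ for $0\le t\le T$, $\delta^T(t)=+\infty$ for $t>T$ (so $(\delta^T*f)(t)=f(\max(t-T,0))$ for nondecreasing $f$). Powers $f^0=e$, $f^k=f^{k-1}*f$; sub-additive closure $f^*=\bigoplus_{k\ge0}f^k$. For matrices, $(A\oplus B)_{ij}=A_{ij}\oplus B_{ij}$, $(A*B)_{ij}=\min_k A_{ik}*B_{kj}$; the identity matrix has $e$ on the diagonal and $\varepsilon$ off the diagonal. A matrix $\beta$ is a service matrix for a server with input $U$ and output $Z$ if $Z\ge\beta*U$ componentwise. Interpretation: $U_{fw}$ is the cumulated demand inflow from upstream, $U_{bw}$ the cumulated supply of the downstream section, $n$ the initial number of cars, $n_{max}$ the capacity (max number of cars) of the section. *)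

theory Defs
  imports "HOL-Library.Extended_Real"
begin

text \<open>Signals: functions of time with values in the extended reals; only times t \<ge> 0 matter.\<close>
type_synonym signal = "real \<Rightarrow> ereal"

definition inF :: "signal \<Rightarrow> bool" where
  "inF f \<longleftrightarrow> mono_on {0..} f \<and> (\<forall>t\<ge>0. f t \<ge> 0)"

definition oplus :: "signal \<Rightarrow> signal \<Rightarrow> signal" where
  "oplus f g = (\<lambda>t. min (f t) (g t))"

definition conv :: "signal \<Rightarrow> signal \<Rightarrow> signal" where
  "conv f g = (\<lambda>t. INF s\<in>{0..t}. f s + g (t - s))"

definition eps :: signal where "eps = (\<lambda>t. \<infinity>)"
definition ee :: signal where "ee = (\<lambda>t. if t = 0 then 0 else \<infinity>)"
definition gam :: "real \<Rightarrow> signal" where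
  "gam p = (\<lambda>t. if t = 0 then ereal p else \<infinity>)"
definition dshift :: "real \<Rightarrow> signal" where
  "dshift T = (\<lambda>t. if 0 \<le> t \<and> t \<le> T then 0 else \<infinity>)"

primrec pow :: "signal \<Rightarrow> nat \<Rightarrow> signal" where
  "pow f 0 = ee"
| "pow f (Suc k) = conv (pow f k) f"

definition star :: "signal \<Rightarrow> signal" where
  "star f = (\<lambda>t. INF k. pow f k t)"

text \<open>Matrices of signals, indexed by naturals (row, column); dimensions are explicit.\<close>
type_synonym smat = "nat \<Rightarrow> nat \<Rightarrow> signal"

definition madd :: "smat \<Rightarrow> smat \<Rightarrow> smat" where
  "madd A B = (\<lambda>i j. oplus (A i j) (B i j))"

definition mmul :: "nat \<Rightarrow> smat \<Rightarrow> smat \<Rightarrow> smat" where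
  "mmul m A B = (\<lambda>i j t. INF l\<in>{..<m}. conv (A i l) (B l j) t)"

definition mid :: smat where
  "mid = (\<lambda>i j. if i = j then ee else eps)"

end

theory Submission
  imports Defs
begin

(* Let d = dx/v, c = qmax dx/v, so that A = gamma^c delta^d, and let S = A* be its
   sub-additive closure.  The queue equation Q = A Q + B U says that at each time t >= 0, Q(t) is at
   least one of c + Q(t-d), n + Ufw(t-d), Ubw(t).  Unrolling this recursion in steps of length d
   (induction on the number of steps needed to reach time 0) shows that Q(t) dominates one term of
   the min-plus product (S B U)(t): for some s in [0,t],
       Q(t) >= n + S(s) + Ufw(t-s-d)   or   Q(t) >= S(s) + Ubw(t-s)
   (predicate closure_bound, lemmas closure_bound_step, closure_bound_all, queue_closure_bound).
   Each output row i has C_i = gamma^g delta^delta (g = delta = 0 forward; g = nmax - n, delta = dx/w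
   backward), hence Y_i(t) >= g + Q(t - delta) for t > 0, while H removes the offset k (k = n resp.
   nmax - n).  As every min-plus product is an infimum, it suffices to exhibit one term of row i of
   H (e + C S B) U below Z_i(t) = max(Y_i(t) - k, 0): the witness s taken at the delayed time gives
   it (lemmas forward_term_le, backward_term_le, row_service), and at t = 0 the bound -k + g <= 0
   suffices. *)

abbreviation gain_delay :: "real \<Rightarrow> real \<Rightarrow> signal" where
  "gain_delay p T \<equiv> conv (gam p) (dshift T)"

section \<open>Min-plus convolution\<close>

lemma conv_le: "0 \<le> s \<Longrightarrow> s \<le> t \<Longrightarrow> conv f g t \<le> f s + g (t - s)"
  unfolding conv_def by (rule INF_lower) auto

lemma conv_ge: "(\<And>s. 0 \<le> s \<Longrightarrow> s \<le> t \<Longrightarrow> x \<le> f s + g (t - s)) \<Longrightarrow> x \<le> conv f g t"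
  unfolding conv_def by (rule INF_greatest) auto

lemma conv_conv_le:
  assumes "0 \<le> a" "0 \<le> b" "a + b \<le> r"
  shows "conv (conv f g) h r \<le> f a + g b + h (r - a - b)"
proof -
  have "conv (conv f g) h r \<le> conv f g (a + b) + h (r - (a + b))"
    using assms by (intro conv_le) auto
  also have "\<dots> \<le> f a + g b + h (r - a - b)"
    using conv_le[of a "a + b" f g] assms by (auto intro: add_right_mono simp: diff_diff_eq)
  finally show ?thesis .
qed

lemma conv_ee_ge: "0 \<le> t \<Longrightarrow> f t \<le> conv ee f t"
  by (rule conv_ge) (auto simp: ee_def)

lemma conv_ee_le: "0 \<le> t \<Longrightarrow> conv ee f t \<le> f t"
  using conv_le[of 0 t ee f] by (simp add: ee_def)

lemma gain_delay_le: "0 \<le> x \<Longrightarrow> x \<le> T \<Longrightarrow> gain_delay p T x \<le> ereal p"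
  using conv_le[of 0 x "gam p" "dshift T"] by (simp add: gam_def dshift_def)

lemma gain_delay_ge: "0 \<le> x \<Longrightarrow> x \<le> T \<Longrightarrow> ereal p \<le> gain_delay p T x"
  by (rule conv_ge) (auto simp: gam_def dshift_def)

lemma gain_delay_beyond: "T < x \<Longrightarrow> gain_delay p T x = \<infinity>"
  using conv_ge[of x \<infinity> "gam p" "dshift T"] by (auto simp: gam_def dshift_def)

lemma ee_eq_gain_delay: "ee = gain_delay 0 0"
proof
  fix x :: real
  consider "x < 0" | "x = 0" | "0 < x" by linarith
  then show "ee x = gain_delay 0 0 x"
  proof cases
    case 1
    then show ?thesis by (simp add: ee_def conv_def top_ereal_def)
  next
    case 2
    then show ?thesis
      using gain_delay_le[of 0 0 0] gain_delay_ge[of 0 0 0] by (simp add: ee_def zero_ereal_def)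
  qed (simp add: ee_def gain_delay_beyond)
qed

lemma conv_gain_delay_ge:
  assumes mono: "mono_on {0..} f" and "0 \<le> T" "0 \<le> t"
  shows "ereal p + f (t - min t T) \<le> conv (gain_delay p T) f t"
proof (rule conv_ge)
  fix s assume s: "0 \<le> s" "s \<le> t"
  show "ereal p + f (t - min t T) \<le> gain_delay p T s + f (t - s)"
  proof (cases "s \<le> T")
    case True
    have "f (t - min t T) \<le> f (t - s)" using assms s True by (intro mono_onD[OF mono]) auto
    with gain_delay_ge[of s T p] s True show ?thesis by (auto intro: add_mono)
  qed (simp add: gain_delay_beyond)
qed

lemma mmul_le: "l < m \<Longrightarrow> mmul m A B i j t \<le> conv (A i l) (B l j) t"
  unfolding mmul_def by (rule INF_lower) simp

lemma mmul1: "mmul 1 A B i j = conv (A i 0) (B 0 j)"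
proof -
  have "{..<1::nat} = {0}" by auto
  thus ?thesis unfolding mmul_def by auto
qed

lemma mmul2: "mmul 2 A B i j t = min (conv (A i 0) (B 0 j) t) (conv (A i 1) (B 1 j) t)"
proof -
  have "{..<2::nat} = {0,1}" by auto
  thus ?thesis unfolding mmul_def by (simp add: inf_min)
qed

lemma service_entry_le:
  assumes "i < 2" "0 \<le> x"
  shows "mmul 2 H (madd mid (mmul 1 (mmul 1 C (\<lambda>i j. S)) B)) i l x
           \<le> H i i 0 + conv (conv (C i 0) S) (B 0 l) x"
proof -
  let ?M = "madd mid (mmul 1 (mmul 1 C (\<lambda>i j. S)) B)"
  have "mmul 2 H ?M i l x \<le> conv (H i i) (?M i l) x" using mmul_le[OF assms(1)] .
  also have "\<dots> \<le> H i i 0 + ?M i l x" using conv_le[of 0 x] assms(2) by simp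
  also have "?M i l x \<le> conv (conv (C i 0) S) (B 0 l) x"
    unfolding madd_def oplus_def mmul1 by simp
  finally show ?thesis by (simp add: add_left_mono)
qed

lemma star_le_pow: "star A x \<le> pow A k x"
  unfolding star_def by (rule INF_lower) simp

lemma star_zero_le: "star A 0 \<le> 0"
  using star_le_pow[of A 0 0] by (simp add: ee_def)

lemma star_le_self: "0 \<le> x \<Longrightarrow> star A x \<le> A x"
  using star_le_pow[of A x 1] conv_ee_le[of x A] by simp

lemma star_shift:
  assumes "0 \<le> s" "0 \<le> d" "A d \<le> ereal c"
  shows "star A (s + d) \<le> ereal c + star A s"
proof -
  have "star A (s + d) - ereal c \<le> pow A k s" for k
  proof -
    have "star A (s + d) \<le> pow A (Suc k) (s + d)" by (rule star_le_pow)
    also have "\<dots> \<le> pow A k s + A d" using conv_le[of s "s + d" "pow A k" A] assms by simp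
    also have "\<dots> \<le> pow A k s + ereal c" using assms by (intro add_left_mono)
    finally show ?thesis by (simp add: ereal_minus_le)
  qed
  hence "star A (s + d) - ereal c \<le> star A s" unfolding star_def by (rule INF_greatest)
  thus ?thesis by (simp add: ereal_minus_le add.commute)
qed

section \<open>The queue dominates \<open>A\<^sup>* B U\<close>\<close>

text \<open>Q(t) dominates one term of \<open>(S * B * U)(t)\<close> with \<open>B = (\<gamma>\<^sup>n \<delta>\<^sup>d, e)\<close>, attained at split point s.\<close>

definition closure_bound ::
  "signal \<Rightarrow> real \<Rightarrow> real \<Rightarrow> signal \<Rightarrow> signal \<Rightarrow> signal \<Rightarrow> real \<Rightarrow> bool" where
  "closure_bound S d n Uf Ub Q t \<longleftrightarrow> (\<exists>s. 0 \<le> s \<and> s \<le> t \<and>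
     (ereal n + S s + Uf (max (t - s - d) 0) \<le> Q t \<or> S s + Ub (t - s) \<le> Q t))"

lemma queue_lower_bound:
  assumes "mono_on {0..} Q" "mono_on {0..} Uf" "0 \<le> d" "0 \<le> t"
    and "Q t = min (conv (gain_delay c d) Q t) (min (conv (gain_delay n d) Uf t) (conv ee Ub t))"
  shows "min (ereal c + Q (t - min t d)) (min (ereal n + Uf (t - min t d)) (Ub t)) \<le> Q t"
  unfolding assms(5)
  using conv_gain_delay_ge[OF assms(1,3,4)] conv_gain_delay_ge[OF assms(2,3,4)] conv_ee_ge[OF assms(4)]
  by (intro min.mono) auto

lemma closure_bound_shift:
  fixes A Q Uf Ub :: signal
  assumes "0 < d" and prev: "closure_bound (star A) d n Uf Ub Q (t - d)"
    and A_d: "A d \<le> ereal c" and step: "ereal c + Q (t - d) \<le> Q t"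
  shows "closure_bound (star A) d n Uf Ub Q t"
proof -
  let ?S = "star A"
  obtain s where s: "0 \<le> s" "s \<le> t - d" and
    wit: "ereal n + ?S s + Uf (max (t - d - s - d) 0) \<le> Q (t - d) \<or> ?S s + Ub (t - d - s) \<le> Q (t - d)"
    using prev unfolding closure_bound_def by auto
  have shift: "?S (s + d) + x \<le> ereal c + (?S s + x)" for x
    using add_right_mono[OF star_shift[of s d A c], of x] s assms(1) A_d by (simp add: add.assoc)
  from wit have "ereal n + ?S (s + d) + Uf (max (t - (s + d) - d) 0) \<le> Q t
                 \<or> ?S (s + d) + Ub (t - (s + d)) \<le> Q t"
  proof
    assume h: "ereal n + ?S s + Uf (max (t - d - s - d) 0) \<le> Q (t - d)"
    have "ereal n + ?S (s + d) + Uf (max (t - (s + d) - d) 0)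
          \<le> ereal c + (ereal n + ?S s + Uf (max (t - d - s - d) 0))"
      using shift[of "ereal n + Uf (max (t - d - s - d) 0)"] by (simp add: ac_simps)
    also have "\<dots> \<le> ereal c + Q (t - d)" using h by (rule add_left_mono)
    finally show ?thesis using step by (blast intro: order_trans)
  next
    assume h: "?S s + Ub (t - d - s) \<le> Q (t - d)"
    have "?S (s + d) + Ub (t - (s + d)) \<le> ereal c + (?S s + Ub (t - d - s))"
      using shift[of "Ub (t - d - s)"] by (simp add: algebra_simps)
    also have "\<dots> \<le> ereal c + Q (t - d)" using h by (rule add_left_mono)
    finally show ?thesis using step by (blast intro: order_trans)
  qed
  thus ?thesis using s assms(1) unfolding closure_bound_def by (intro exI[of _ "s + d"]) auto
qed

text \<open>One step of the unrolling: each of the three alternatives of the queue equation at time t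
  gives a witness at t, directly (s = 0 or s = t) or by shifting the witness at t - d.\<close>

lemma closure_bound_step:
  fixes A Q Uf Ub :: signal
  assumes "0 < d" "0 \<le> t"
    and A_le: "\<And>x. 0 \<le> x \<Longrightarrow> x \<le> d \<Longrightarrow> A x \<le> ereal c"
    and Q_nonneg: "\<And>t. 0 \<le> t \<Longrightarrow> 0 \<le> Q t" and Ub0: "Ub 0 = 0"
    and Q_low: "min (ereal c + Q (t - min t d)) (min (ereal n + Uf (t - min t d)) (Ub t)) \<le> Q t"
    and prev: "d < t \<Longrightarrow> closure_bound (star A) d n Uf Ub Q (t - d)"
  shows "closure_bound (star A) d n Uf Ub Q t"
proof -
  let ?S = "star A"
  have S0: "?S 0 \<le> 0" by (rule star_zero_le)
  consider "ereal n + Uf (t - min t d) \<le> Q t" | "Ub t \<le> Q t" | "ereal c + Q (t - min t d) \<le> Q t"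
    using Q_low by (auto simp: min_le_iff_disj)
  then show ?thesis
  proof cases
    case 1
    have "ereal n + ?S 0 + Uf (max (t - 0 - d) 0) \<le> ereal n + 0 + Uf (t - min t d)"
      using S0 by (intro add_mono) (auto simp: max_def min_def)
    with 1 show ?thesis using assms(2) unfolding closure_bound_def by (intro exI[of _ 0]) auto
  next
    case 2
    have "?S 0 + Ub (t - 0) \<le> 0 + Ub t" using S0 by (intro add_mono) auto
    with 2 show ?thesis using assms(2) unfolding closure_bound_def by (intro exI[of _ 0]) auto
  next
    case 3
    show ?thesis
    proof (cases "t \<le> d")
      case True
      have "?S t + Ub (t - t) \<le> ereal c" using star_le_self[of t A] A_le[of t] True assms(2) Ub0 by simp
      also have "\<dots> \<le> ereal c + Q (t - min t d)" using Q_nonneg[of "t - min t d"] assms(2)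
        by (simp add: add_increasing2)
      finally show ?thesis using 3 assms(2) unfolding closure_bound_def by (intro exI[of _ t]) auto
    next
      case False
      then show ?thesis
        using closure_bound_shift[OF assms(1) prev A_le[of d]] 3 assms(1) by simp
    qed
  qed
qed

lemma closure_bound_all:
  fixes A Q Uf Ub :: signal
  assumes "0 < d"
    and A_le: "\<And>x. 0 \<le> x \<Longrightarrow> x \<le> d \<Longrightarrow> A x \<le> ereal c"
    and Q_nonneg: "\<And>t. 0 \<le> t \<Longrightarrow> 0 \<le> Q t" and Ub0: "Ub 0 = 0"
    and Q_low: "\<And>t. 0 \<le> t \<Longrightarrow>
      min (ereal c + Q (t - min t d)) (min (ereal n + Uf (t - min t d)) (Ub t)) \<le> Q t"
    and "0 \<le> t"
  shows "closure_bound (star A) d n Uf Ub Q t"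
proof -
  have "\<forall>t. 0 \<le> t \<and> t < real k * d \<longrightarrow> closure_bound (star A) d n Uf Ub Q t" for k
  proof (induction k)
    case (Suc k)
    show ?case
    proof (intro allI impI)
      fix t assume t: "0 \<le> t \<and> t < real (Suc k) * d"
      have "d < t \<Longrightarrow> closure_bound (star A) d n Uf Ub Q (t - d)"
        using Suc.IH t by (auto simp: algebra_simps)
      with t show "closure_bound (star A) d n Uf Ub Q t"
        using closure_bound_step[where A = A and c = c and d = d and Q = Q and Ub = Ub and n = n
            and Uf = Uf and t = t] assms(1) A_le Q_nonneg Ub0 Q_low by blast
    qed
  qed (use assms(1) in auto)
  moreover obtain k where "t < real k * d" using ex_less_of_nat_mult[OF assms(1)] by blast
  ultimately show ?thesis using assms(6) by blast
qed

lemma queue_closure_bound: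
  assumes "0 < d" "inF Q" "mono_on {0..} Uf" "Ub 0 = 0"
    and dyn: "\<And>t. 0 \<le> t \<Longrightarrow>
      Q t = min (conv (gain_delay c d) Q t) (min (conv (gain_delay n d) Uf t) (conv ee Ub t))"
    and "0 \<le> t"
  shows "closure_bound (star (gain_delay c d)) d n Uf Ub Q t"
proof -
  have monoQ: "mono_on {0..} Q" and Q_nonneg: "\<And>t. 0 \<le> t \<Longrightarrow> 0 \<le> Q t"
    using assms(2) by (auto simp: inF_def)
  have Q_low: "min (ereal c + Q (t - min t d)) (min (ereal n + Uf (t - min t d)) (Ub t)) \<le> Q t"
    if "0 \<le> t" for t
    using queue_lower_bound[OF monoQ assms(3) _ that dyn[OF that]] assms(1) by simp
  show ?thesis
    using assms(1) gain_delay_le Q_nonneg assms(4) Q_low assms(6) by (rule closure_bound_all)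
qed

section \<open>Service of one output row\<close>

lemma ereal_neg_add: "ereal (- k) + y = y - ereal k"
  by (cases y) auto

lemma entry_split_le:
  assumes "R x \<le> ereal (- k) + conv (conv Ci S) Bl x" "0 \<le> a" "0 \<le> b" "a + b \<le> x"
  shows "R x \<le> ereal (- k) + (Ci a + S b + Bl (x - a - b))"
  using assms(1) add_left_mono[OF conv_conv_le[OF assms(2-4)]] by (rule order_trans)

text \<open>The two kinds of witness of closure_bound, taken at the delayed time t - m, each select
  one term of the row product that is at most \<open>-k + g + Q(t - m)\<close>: a forward witness s yields the
  split point \<open>min t (m + s + d)\<close> of the forward entry, a backward one the split point m + s.\<close>

lemma forward_term_le:
  assumes "0 \<le> m" "0 \<le> s" "m + s \<le> t" "0 \<le> d"
    and Ci_m: "Ci m \<le> ereal g"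
    and Bf_le: "\<And>x. 0 \<le> x \<Longrightarrow> x \<le> d \<Longrightarrow> Bf x \<le> ereal n"
    and Rfw: "\<And>x. 0 \<le> x \<Longrightarrow> Rfw x \<le> ereal (- k) + conv (conv Ci S) Bf x"
    and fw: "ereal n + S s + Uf (max (t - m - s - d) 0) \<le> Q (t - m)"
  shows "conv Rfw Uf t \<le> ereal (- k) + (ereal g + Q (t - m))"
proof -
  define r where "r = min t (m + s + d)"
  have r: "0 \<le> r" "r \<le> t" "m + s \<le> r" "r - m - s \<le> d" "t - r = max (t - m - s - d) 0"
    using assms(1-4) by (auto simp: r_def)
  let ?u = "Uf (max (t - m - s - d) 0)"
  have "conv Rfw Uf t \<le> Rfw r + ?u" using conv_le[OF r(1,2), of Rfw Uf] r(5) by simp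
  also have "\<dots> \<le> ereal (- k) + (Ci m + S s + Bf (r - m - s)) + ?u"
    using entry_split_le[of Rfw r k Ci S Bf m s, OF Rfw[OF r(1)] assms(1,2) r(3)]
    by (rule add_right_mono)
  also have "\<dots> \<le> ereal (- k) + (ereal g + S s + ereal n) + ?u"
    using Ci_m Bf_le[of "r - m - s"] r(3,4) by (intro add_mono add_left_mono order_refl) auto
  also have "\<dots> = ereal (- k) + (ereal g + (ereal n + S s + ?u))" by (simp only: ac_simps)
  also have "\<dots> \<le> ereal (- k) + (ereal g + Q (t - m))" using fw by (intro add_left_mono)
  finally show ?thesis .
qed

lemma backward_term_le:
  assumes "0 \<le> m" "0 \<le> s" "m + s \<le> t"
    and Ci_m: "Ci m \<le> ereal g"
    and Rbw: "\<And>x. 0 \<le> x \<Longrightarrow> Rbw x \<le> ereal (- k) + conv (conv Ci S) ee x"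
    and bw: "S s + Ub (t - m - s) \<le> Q (t - m)"
  shows "conv Rbw Ub t \<le> ereal (- k) + (ereal g + Q (t - m))"
proof -
  have ms: "0 \<le> m + s" using assms(1,2) by simp
  have "conv Rbw Ub t \<le> Rbw (m + s) + Ub (t - m - s)"
    using conv_le[OF ms assms(3), of Rbw Ub] by (simp add: diff_diff_eq)
  also have "\<dots> \<le> ereal (- k) + (Ci m + S s + ee 0) + Ub (t - m - s)"
    using entry_split_le[of Rbw "m + s" k Ci S ee m s, OF Rbw[OF ms] assms(1,2)]
    by (intro add_right_mono) simp
  also have "\<dots> \<le> ereal (- k) + (ereal g + S s) + Ub (t - m - s)"
    using Ci_m by (intro add_right_mono add_left_mono) (simp add: ee_def add_right_mono)
  also have "\<dots> = ereal (- k) + (ereal g + (S s + Ub (t - m - s)))" by (simp only: ac_simps)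
  also have "\<dots> \<le> ereal (- k) + (ereal g + Q (t - m))" using bw by (intro add_left_mono)
  finally show ?thesis .
qed

text \<open>For t > 0 the witness of closure_bound at the delayed time \<open>t - \<delta>\<close>
  selects the required term of the product; at t = 0 the bound \<open>-k + g \<le> 0\<close> suffices.\<close>

lemma row_service:
  fixes Rfw Rbw Ci S Bf Q Yi Uf Ub :: signal
  assumes "0 \<le> \<delta>" "0 \<le> d" "g \<le> k"
    and Ci_le: "\<And>x. 0 \<le> x \<Longrightarrow> x \<le> \<delta> \<Longrightarrow> Ci x \<le> ereal g"
    and S0: "S 0 \<le> 0"
    and Bf_le: "\<And>x. 0 \<le> x \<Longrightarrow> x \<le> d \<Longrightarrow> Bf x \<le> ereal n"
    and Rfw: "\<And>x. 0 \<le> x \<Longrightarrow> Rfw x \<le> ereal (- k) + conv (conv Ci S) Bf x"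
    and Rbw: "\<And>x. 0 \<le> x \<Longrightarrow> Rbw x \<le> ereal (- k) + conv (conv Ci S) ee x"
    and Ub0: "Ub 0 = 0"
    and Yi: "\<And>t. 0 < t \<Longrightarrow> ereal g + Q (t - min t \<delta>) \<le> Yi t"
    and cover: "\<And>t. 0 \<le> t \<Longrightarrow> closure_bound S d n Uf Ub Q t"
    and t: "0 \<le> t"
  shows "min (conv Rfw Uf t) (conv Rbw Ub t) \<le> max (Yi t - ereal k) 0"
proof (cases "t = 0")
  case True
  have "conv Rbw Ub t \<le> Rbw 0 + Ub 0" using conv_le[of 0 t Rbw Ub] True by simp
  also have "\<dots> \<le> ereal (- k) + (Ci 0 + S 0 + ee 0)"
    using entry_split_le[of Rbw 0 k Ci S ee 0 0, OF Rbw] Ub0 by simp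
  also have "\<dots> \<le> ereal (- k) + ereal g"
    using add_mono[OF Ci_le[of 0] S0] assms(1) by (intro add_left_mono) (simp add: ee_def)
  also have "\<dots> \<le> max (Yi t - ereal k) 0" using assms(3) by (simp add: max.coboundedI2)
  finally show ?thesis by (rule min.coboundedI2)
next
  case False
  define m where "m = min t \<delta>"
  have m: "0 \<le> m" "m \<le> t" "Ci m \<le> ereal g" using t assms(1) Ci_le[of m] by (auto simp: m_def)
  have Q_serv: "ereal (- k) + (ereal g + Q (t - m)) \<le> max (Yi t - ereal k) 0"
    using Yi[of t] t False by (simp add: ereal_neg_add ereal_minus_mono m_def max.coboundedI1)
  obtain s where s: "0 \<le> s" "m + s \<le> t" and
    wit: "ereal n + S s + Uf (max (t - m - s - d) 0) \<le> Q (t - m) \<or> S s + Ub (t - m - s) \<le> Q (t - m)"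
    using cover[of "t - m"] m(2) unfolding closure_bound_def by auto
  from wit show ?thesis
    using forward_term_le[OF m(1) s assms(2) m(3) Bf_le Rfw]
      backward_term_le[OF m(1) s m(3) Rbw] Q_serv
    by (meson min.coboundedI1 min.coboundedI2 order_trans)
qed

lemma matrix_row_service:
  fixes H C B U :: smat and A Q Yi :: signal
  assumes "i < 2" "0 \<le> \<delta>" "0 \<le> d" "g \<le> k"
    and H: "H i i 0 = ereal (- k)"
    and B: "B 0 0 = gain_delay n d" "B 0 1 = ee"
    and C: "C i 0 = gain_delay g \<delta>"
    and Ub0: "U 1 0 0 = 0"
    and monoQ: "mono_on {0..} Q"
    and Yi: "\<And>t. 0 < t \<Longrightarrow> Yi t = conv (C i 0) Q t"
    and cover: "\<And>t. 0 \<le> t \<Longrightarrow> closure_bound (star A) d n (U 0 0) (U 1 0) Q t"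
    and t: "0 \<le> t"
  shows "mmul 2 (mmul 2 H (madd mid (mmul 1 (mmul 1 C (\<lambda>i j. star A)) B))) U i 0 t
           \<le> max (Yi t - ereal k) 0"
proof -
  let ?X = "mmul 2 H (madd mid (mmul 1 (mmul 1 C (\<lambda>i j. star A)) B))"
  have entry: "?X i l x \<le> ereal (- k) + conv (conv (C i 0) (star A)) (B 0 l) x" if "0 \<le> x" for l x
    using service_entry_le[OF assms(1) that, of H C "star A" B l] H by simp
  have C_le: "\<And>x. 0 \<le> x \<Longrightarrow> x \<le> \<delta> \<Longrightarrow> C i 0 x \<le> ereal g"
    unfolding C by (rule gain_delay_le)
  have B_le: "\<And>x. 0 \<le> x \<Longrightarrow> x \<le> d \<Longrightarrow> B 0 0 x \<le> ereal n"
    unfolding B by (rule gain_delay_le)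
  have Y_low: "\<And>t. 0 < t \<Longrightarrow> ereal g + Q (t - min t \<delta>) \<le> Yi t"
    unfolding Yi C using conv_gain_delay_ge[OF monoQ assms(2)] by simp
  have "min (conv (?X i 0) (U 0 0) t) (conv (?X i 1) (U 1 0) t) \<le> max (Yi t - ereal k) 0"
    using row_service[where Rfw = "?X i 0" and Rbw = "?X i 1" and Ci = "C i 0" and S = "star A"
        and Bf = "B 0 0" and Yi = Yi and Q = Q and Uf = "U 0 0" and Ub = "U 1 0",
        OF assms(2-4) C_le star_zero_le B_le entry entry[of _ 1, unfolded B(2)] Ub0 Y_low cover t] .
  then show ?thesis by (simp add: mmul2)
qed

theorem theorem2:
  fixes dx v w qmax n nmax :: real
    and Ufw Ubw Q Yfw Ybw :: signal
  assumes "dx > 0" and "v > 0" and "w > 0" and "qmax > 0"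
    and "0 \<le> n" and "n \<le> nmax"
    and "inF Ufw" and "inF Ubw" and "inF Q" and "inF Yfw" and "inF Ybw"
    and "Ufw 0 = 0" and "Ubw 0 = 0" and "Yfw 0 = 0" and "Ybw 0 = 0"
  defines "A \<equiv> conv (gam (qmax * dx / v)) (dshift (dx / v))"
    and "B \<equiv> (\<lambda>i j. if j = 0 then conv (gam n) (dshift (dx / v)) else ee) :: smat"
    and "C \<equiv> (\<lambda>i j. if i = 0 then ee else conv (gam (nmax - n)) (dshift (dx / w))) :: smat"
    and "U \<equiv> (\<lambda>i j. if i = 0 then Ufw else Ubw) :: smat"
    and "Y \<equiv> (\<lambda>i j. if i = 0 then Yfw else Ybw) :: smat"
    and "Qm \<equiv> (\<lambda>i j. Q) :: smat"
    and "H \<equiv> (\<lambda>i j. if i = 0 \<and> j = 0 then gam (- n)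
                   else if i = 1 \<and> j = 1 then gam (- (nmax - n)) else ee) :: smat"
    and "Z \<equiv> (\<lambda>i j t. if i = 0 then max (Yfw t - ereal n) 0
                     else max (Ybw t - ereal (nmax - n)) 0) :: smat"
  assumes dynQ: "\<forall>t\<ge>0. Q t = oplus (conv A Q) (mmul 2 B U 0 0) t"
    and dynY: "\<forall>i<2. \<forall>t\<ge>0. Y i 0 t = oplus (mmul 1 C Qm i 0) ee t"
  shows "\<forall>i<2. \<forall>t\<ge>0.
           Z i 0 t \<ge> mmul 2 (mmul 2 H (madd mid (mmul 1 (mmul 1 C (\<lambda>i j. star A)) B))) U i 0 t"
proof (intro allI impI)
  fix i :: nat and t :: real assume i: "i < 2" and t: "0 \<le> t"
  define d nb dw where "d = dx / v" and "nb = nmax - n" and "dw = dx / w"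
  have pos: "0 < d" "0 \<le> dw" using assms(1-3) by (simp_all add: d_def dw_def)
  have monoQ: "mono_on {0..} Q" using assms(9) by (simp add: inF_def)
  have cover: "closure_bound (star A) d n (U 0 0) (U 1 0) Q s" if "0 \<le> s" for s
    unfolding A_def d_def U_def
    by (rule queue_closure_bound) (use assms(1,2,7,9,13) dynQ that in
        \<open>auto simp: inF_def oplus_def mmul2 A_def B_def U_def\<close>)
  have Y_out: "\<And>s. 0 < s \<Longrightarrow> Y i 0 s = conv (C i 0) Q s"
    using dynY i unfolding mmul1 by (auto simp: oplus_def Qm_def ee_def)
  have Ub0: "U 1 0 0 = 0" using assms(13) by (simp add: U_def)
  have B: "B 0 0 = gain_delay n d" "B 0 1 = ee" by (simp_all add: B_def d_def)
  (* row 0: C_0 = e = gamma^0 delta^0 and H_00 = gamma^-n; row 1: C_1 = gamma^nb delta^dw, H_11 = gamma^-nb *)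
  consider "i = 0" | "i = 1" using i by linarith
  then show "mmul 2 (mmul 2 H (madd mid (mmul 1 (mmul 1 C (\<lambda>i j. star A)) B))) U i 0 t \<le> Z i 0 t"
  proof cases
    case 1
    have "C i 0 = gain_delay 0 0" using 1 by (simp add: C_def ee_eq_gain_delay)
    from matrix_row_service[where H = H and B = B and C = C and U = U and A = A and Q = Q
        and Yi = "Y i 0", OF i order_refl _ assms(5) _ B this Ub0 monoQ Y_out cover t] 1 pos
    show ?thesis by (simp add: H_def gam_def Z_def Y_def)
  next
    case 2
    have "C i 0 = gain_delay nb dw" using 2 by (simp add: C_def nb_def dw_def)
    from matrix_row_service[where H = H and B = B and C = C and U = U and A = A and Q = Q
        and Yi = "Y i 0", OF i pos(2) _ order_refl _ B this Ub0 monoQ Y_out cover t] 2 pos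
    show ?thesis by (simp add: H_def gam_def Z_def Y_def nb_def)
  qed
qed

end
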